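(* Let $G=(\mathcal{N},\mathcal{A})$ be a directed graph with $m$ nodes and $n$ arcs, start node $s$ and end node $t$, let $\mathbf{A}\in\mathbb{R}^{(m-1)\times n}$ be its node–arc incidence matrix with the row of $t$ deleted, and let $\mathbf{b}\in\mathbb{R}^{m-1}$ have entry $+1$ at $s$ and $0$ elsewhere. Let $\hat{\mathbf{x}}^r_1,\dots,\hat{\mathbf{x}}^r_R$ satisfy $\mathbf{A}\hat{\mathbf{x}}^r_q=\mathbf{b}$, $\hat{\mathbf{x}}^r_q\ge\mathbf{0}$. Let $(\mathbf{c}^*,\mathbf{p}^*,\boldsymbol{\epsilon}^{*})$ be an optimal solution of $$\min_{\mathbf{c},\mathbf{p},\boldsymbol{\epsilon}}\ \sum_{q=1}^R \epsilon_q^2\quad\text{s.t.}\quad \mathbf{A}^\top\mathbf{p}\le \mathbf{c},\quad \mathbf{c}^\top\hat{\mathbf{x}}^r_q=\mathbf{b}^\top\mathbf{p}+\epsilon_q\ (q=1,\dots,R),\quad \|\mathbf{c}\|_\infty=1,\quad \mathbf{A}\mathbf{c}=\mathbf{0}.$$ Then the network $G$ with arc costs $\mathbf{c}^*$ contains no directed cycle of negative total cost.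
   Context: In the incidence matrix, the column of arc $(i,j)$ has $+1$ in row $i$ and $-1$ in row $j$ (rows other than $t$). The forward problem is $\min\{\mathbf{c}^\top\mathbf{x}:\mathbf{A}\mathbf{x}=\mathbf{b},\ \mathbf{x}\ge\mathbf{0}\}$, and $\mathbf{p}$ is the dual vector of its flow-balance constraints. *)

theory Defs
  imports Main "HOL-Analysis.Analysis"
begin

text \<open>Vectors indexed by arcs are functions ('v \<times> 'v) \<Rightarrow> real (only values on Arcs matter),
  vectors indexed by the rows N - {t} are functions 'v \<Rightarrow> real.\<close>

definition incid :: "'v \<Rightarrow> 'v \<times> 'v \<Rightarrow> real" where
  "incid i a = (if i = fst a then 1 else 0) - (if i = snd a then 1 else 0)"

definition Amul :: "('v \<times> 'v) set \<Rightarrow> (('v \<times> 'v) \<Rightarrow> real) \<Rightarrow> 'v \<Rightarrow> real" where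
  "Amul Arcs x i = (\<Sum>a\<in>Arcs. incid i a * x a)"

definition ATmul :: "'v set \<Rightarrow> 'v \<Rightarrow> ('v \<Rightarrow> real) \<Rightarrow> ('v \<times> 'v) \<Rightarrow> real" where
  "ATmul N t p a = (\<Sum>i\<in>N - {t}. incid i a * p i)"

definition bvec :: "'v \<Rightarrow> 'v \<Rightarrow> real" where
  "bvec s i = (if i = s then 1 else 0)"

definition bdot :: "'v set \<Rightarrow> 'v \<Rightarrow> 'v \<Rightarrow> ('v \<Rightarrow> real) \<Rightarrow> real" where
  "bdot N s t p = (\<Sum>i\<in>N - {t}. bvec s i * p i)"

definition cdot :: "('v \<times> 'v) set \<Rightarrow> (('v \<times> 'v) \<Rightarrow> real) \<Rightarrow> (('v \<times> 'v) \<Rightarrow> real) \<Rightarrow> real" where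
  "cdot Arcs c x = (\<Sum>a\<in>Arcs. c a * x a)"

definition infnorm_arcs :: "('v \<times> 'v) set \<Rightarrow> (('v \<times> 'v) \<Rightarrow> real) \<Rightarrow> real" where
  "infnorm_arcs Arcs c = Max ((\<lambda>a. \<bar>c a\<bar>) ` Arcs)"

definition io_feasible ::
  "'v set \<Rightarrow> ('v \<times> 'v) set \<Rightarrow> 'v \<Rightarrow> 'v \<Rightarrow> nat \<Rightarrow> (nat \<Rightarrow> ('v \<times> 'v) \<Rightarrow> real)
   \<Rightarrow> (('v \<times> 'v) \<Rightarrow> real) \<Rightarrow> ('v \<Rightarrow> real) \<Rightarrow> (nat \<Rightarrow> real) \<Rightarrow> bool" where
  "io_feasible N Arcs s t R xhat c p eps \<longleftrightarrow>
     (\<forall>a\<in>Arcs. ATmul N t p a \<le> c a) \<and>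
     (\<forall>q\<in>{1..R}. cdot Arcs c (xhat q) = bdot N s t p + eps q) \<and>
     infnorm_arcs Arcs c = 1 \<and>
     (\<forall>i\<in>N - {t}. Amul Arcs c i = 0)"

definition io_objective :: "nat \<Rightarrow> (nat \<Rightarrow> real) \<Rightarrow> real" where
  "io_objective R eps = (\<Sum>q=1..R. (eps q)\<^sup>2)"

definition is_dicycle :: "('v \<times> 'v) set \<Rightarrow> 'v list \<Rightarrow> bool" where
  "is_dicycle Arcs vs \<longleftrightarrow> vs \<noteq> [] \<and> distinct vs \<and>
     (\<forall>i<length vs. (vs ! i, vs ! ((i + 1) mod length vs)) \<in> Arcs)"

definition cycle_cost :: "(('v \<times> 'v) \<Rightarrow> real) \<Rightarrow> 'v list \<Rightarrow> real" where
  "cycle_cost c vs = (\<Sum>i<length vs. c (vs ! i, vs ! ((i + 1) mod length vs)))"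

end

theory Submission
  imports Defs
begin

text \<open>Dual feasibility \<open>A\<^sup>T p \<le> c\<close> alone forces every directed cycle to have nonnegative cost:
  extending \<open>p\<close> by \<open>p t = 0\<close>, it says \<open>p i - p j \<le> c (i, j)\<close> on every arc, and summing along
  a cycle the potential differences telescope to zero.\<close>

lemma sum_cyclic_differences_eq_0:
  fixes f :: "nat \<Rightarrow> 'a::ab_group_add"
  assumes "n > 0"
  shows "(\<Sum>i<n. f i - f ((i + 1) mod n)) = 0"
proof -
  obtain m where n: "n = Suc m" using assms by (cases n) auto
  have "(\<Sum>i<Suc m. f ((i + 1) mod Suc m)) = (\<Sum>i<m. f ((i + 1) mod Suc m)) + f 0"
    by (simp add: sum.lessThan_Suc)
  also have "(\<Sum>i<m. f ((i + 1) mod Suc m)) = (\<Sum>i<m. f (Suc i))"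
    by (intro sum.cong) auto
  also have "(\<Sum>i<m. f (Suc i)) + f 0 = (\<Sum>i<Suc m. f i)"
    by (simp only: sum.lessThan_Suc_shift add.commute)
  finally show ?thesis
    using n by (simp add: sum_subtractf)
qed

lemma cycle_cost_nonneg_if_potential:
  assumes "is_dicycle Arcs vs"
    and potential: "\<And>i j. (i, j) \<in> Arcs \<Longrightarrow> P i - P j \<le> c (i, j)"
  shows "0 \<le> cycle_cost c vs"
proof -
  define n where "n = length vs"
  have "n > 0" and arcs: "\<And>i. i < n \<Longrightarrow> (vs ! i, vs ! ((i + 1) mod n)) \<in> Arcs"
    using assms(1) unfolding is_dicycle_def n_def by auto
  have "0 = (\<Sum>i<n. P (vs ! i) - P (vs ! ((i + 1) mod n)))"
    using sum_cyclic_differences_eq_0[OF \<open>n > 0\<close>, of "\<lambda>i. P (vs ! i)"] by simp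
  also have "\<dots> \<le> (\<Sum>i<n. c (vs ! i, vs ! ((i + 1) mod n)))"
    by (intro sum_mono potential arcs) simp
  finally show ?thesis
    unfolding cycle_cost_def n_def .
qed

lemma ATmul_arc:
  assumes "finite N"
  shows "ATmul N t p (i, j) =
    (if i \<in> N - {t} then p i else 0) - (if j \<in> N - {t} then p j else 0)"
proof -
  have "ATmul N t p (i, j) =
      (\<Sum>k\<in>N - {t}. (if k = i then p k else 0) - (if k = j then p k else 0))"
    unfolding ATmul_def incid_def by (intro sum.cong) (auto simp: algebra_simps)
  also have "\<dots> = (if i \<in> N - {t} then p i else 0) - (if j \<in> N - {t} then p j else 0)"
    using assms by (simp add: sum_subtractf sum.delta')
  finally show ?thesis .
qed

theorem proposition1:
  fixes N :: "'v set" and Arcs :: "('v \<times> 'v) set" and s t :: 'v and R :: nat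
    and xhat :: "nat \<Rightarrow> ('v \<times> 'v) \<Rightarrow> real"
    and cs :: "('v \<times> 'v) \<Rightarrow> real" and ps :: "'v \<Rightarrow> real" and epss :: "nat \<Rightarrow> real"
  assumes "finite N" and "Arcs \<subseteq> N \<times> N"
    and "s \<in> N" and "t \<in> N" and "s \<noteq> t"
    and "\<forall>q\<in>{1..R}. (\<forall>i\<in>N - {t}. Amul Arcs (xhat q) i = bvec s i) \<and> (\<forall>a\<in>Arcs. xhat q a \<ge> 0)"
    and "io_feasible N Arcs s t R xhat cs ps epss"
    and "\<forall>c p eps. io_feasible N Arcs s t R xhat c p eps \<longrightarrow> io_objective R epss \<le> io_objective R eps"
  shows "\<not> (\<exists>vs. is_dicycle Arcs vs \<and> cycle_cost cs vs < 0)"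
proof -
  define P where "P k = (if k \<in> N - {t} then ps k else 0)" for k
  have "P i - P j \<le> cs (i, j)" if "(i, j) \<in> Arcs" for i j
    using that assms(7) ATmul_arc[OF assms(1), of t ps i j]
    unfolding io_feasible_def P_def by fastforce
  then show ?thesis
    using cycle_cost_nonneg_if_potential by (metis not_le)
qed

end
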